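(* Let $V$ be a finite set, $C$ a partition of $V$, $k>0$, $G=(V,E)$ the clique graph of $C$ with edge weight $k$, and let $M\ge 0$ and $\beta>0$. Let $d$ be a cluster in some clustering of $G$ (so $d$ is a nonempty subset of $V$), and put $q(d)=\frac{w_d}{M+v_d/\beta}-\left(\frac{v_d}{M+v_d/\beta}\right)^2$. Then $$\frac{w_d}{v_d}-\beta-\frac{\beta M}{k}\;\le\;\frac{q(d)}{\beta}\;\le\;\frac{w_d}{v_d}-\beta+\frac{2\beta^2M}{k}.$$
   Context: The clique graph of a partition $C$ of $V$ with edge weight $k$ is $G=(V,E)$ with $E(i,j)=k$ if $i$ and $j$ lie in the same block of $C$ (including $i=j$) and $E(i,j)=0$ otherwise. For $d\subseteq V$: $v_d=\sum_{i\in d}\sum_{j\in V}E(i,j)$ and $w_d=\sum_{i,j\in d}E(i,j)$. The quantity $q(d)$ is the contribution of $d$ to the adaptive scale modularity with parameters $M$ and $\gamma=1/\beta$. *)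

theory Defs
  imports Complex_Main "HOL-Library.Disjoint_Sets"
begin

definition clique_weight :: "'a set set \<Rightarrow> real \<Rightarrow> 'a \<Rightarrow> 'a \<Rightarrow> real" where
  "clique_weight C k i j = (if \<exists>c\<in>C. i \<in> c \<and> j \<in> c then k else 0)"

definition vol :: "'a set \<Rightarrow> ('a \<Rightarrow> 'a \<Rightarrow> real) \<Rightarrow> 'a set \<Rightarrow> real" where
  "vol V E d = (\<Sum>i\<in>d. \<Sum>j\<in>V. E i j)"

definition wgt_in :: "('a \<Rightarrow> 'a \<Rightarrow> real) \<Rightarrow> 'a set \<Rightarrow> real" where
  "wgt_in E d = (\<Sum>i\<in>d. \<Sum>j\<in>d. E i j)"

text \<open>Contribution of cluster d to the adaptive scale modularity, gamma = 1/beta.\<close>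
definition qual :: "real \<Rightarrow> real \<Rightarrow> 'a set \<Rightarrow> ('a \<Rightarrow> 'a \<Rightarrow> real) \<Rightarrow> 'a set \<Rightarrow> real" where
  "qual M \<beta> V E d = wgt_in E d / (M + vol V E d / \<beta>) - (vol V E d / (M + vol V E d / \<beta>))^2"

end

theory Submission
  imports Defs
begin

text \<open>With \<open>a = \<beta> M\<close>, the quantity \<open>q(d)/\<beta>\<close> equals \<open>w/(v+a) - \<beta> (v/(v+a))\<^sup>2\<close>.
  Replacing \<open>v + a\<close> by \<open>v\<close> changes the first term by at most \<open>a/(v+a)\<close> and the second by at
  most \<open>2 \<beta> a/(v+a)\<close>; in a clique graph every vertex of \<open>d\<close> carries a self-loop of
  weight \<open>k\<close>, so \<open>v \<ge> k\<close> and both errors are controlled by \<open>a/k\<close>.\<close>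

lemma wgt_in_nonneg:
  assumes "\<And>i j. E i j \<ge> 0"
  shows "0 \<le> wgt_in E d"
  unfolding wgt_in_def using assms by (intro sum_nonneg) auto

lemma wgt_in_le_vol:
  assumes "finite V" and "d \<subseteq> V" and "\<And>i j. E i j \<ge> 0"
  shows "wgt_in E d \<le> vol V E d"
  unfolding wgt_in_def vol_def using assms by (intro sum_mono sum_mono2) auto

lemma self_weight_le_vol:
  assumes "finite V" and "d \<subseteq> V" and "i \<in> d" and "\<And>i j. E i j \<ge> 0"
  shows "E i i \<le> vol V E d"
proof -
  have "E i i \<le> (\<Sum>j\<in>V. E i j)"
    using assms by (intro member_le_sum) auto
  also have "\<dots> \<le> vol V E d"
    unfolding vol_def using assms finite_subset[of d V]
    by (intro member_le_sum sum_nonneg) auto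
  finally show ?thesis .
qed

lemma clique_weight_nonneg: "k \<ge> 0 \<Longrightarrow> clique_weight C k i j \<ge> 0"
  by (simp add: clique_weight_def)

lemma clique_weight_self:
  assumes "partition_on V C" and "i \<in> V"
  shows "clique_weight C k i i = k"
  using assms unfolding partition_on_def clique_weight_def by auto

lemma vol_clique_weight_ge:
  assumes "finite V" and "partition_on V C" and "k \<ge> 0" and "d \<subseteq> V" and "d \<noteq> {}"
  shows "k \<le> vol V (clique_weight C k) d"
proof -
  obtain i where "i \<in> d" using \<open>d \<noteq> {}\<close> by blast
  then have "clique_weight C k i i = k"
    using assms by (auto intro: clique_weight_self[OF \<open>partition_on V C\<close>])
  moreover have "clique_weight C k i i \<le> vol V (clique_weight C k) d"
    using assms \<open>i \<in> d\<close> by (intro self_weight_le_vol clique_weight_nonneg)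
  ultimately show ?thesis by simp
qed

lemma quality_div_scale_eq:
  fixes w v M \<beta> :: real
  assumes "\<beta> > 0" and "v + \<beta> * M \<noteq> 0"
  shows "(w / (M + v / \<beta>) - (v / (M + v / \<beta>))^2) / \<beta>
           = w / (v + \<beta> * M) - \<beta> * (v / (v + \<beta> * M))^2"
proof -
  have "M + v / \<beta> = (v + \<beta> * M) / \<beta>"
    using assms by (simp add: field_simps)
  then show ?thesis
    using assms by (simp add: power_divide diff_divide_distrib power2_eq_square)
qed

lemma quality_div_scale_lower:
  fixes w v k a \<beta> :: real
  assumes "0 \<le> w" "w \<le> v" "0 < k" "k \<le> v" "0 \<le> a" "0 < \<beta>"
  shows "w / v - \<beta> - a / k \<le> w / (v + a) - \<beta> * (v / (v + a))^2"
proof -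
  have v: "v > 0" using assms by linarith
  have "w / v - w / (v + a) = w * a / (v * (v + a))"
    using v assms by (simp add: field_simps)
  also have "\<dots> \<le> v * a / (v * (v + a))"
    using assms v by (intro divide_right_mono mult_right_mono) auto
  also have "\<dots> = a / (v + a)" using v by simp
  also have "\<dots> \<le> a / k" using assms by (intro divide_left_mono) auto
  finally have first: "w / v - w / (v + a) \<le> a / k" .
  have "(v / (v + a))^2 \<le> 1"
    using v assms by (simp add: power_le_one)
  then have "\<beta> * (v / (v + a))^2 \<le> \<beta>"
    using assms mult_left_mono[of _ 1 \<beta>] by auto
  with first show ?thesis by linarith
qed

lemma quality_div_scale_upper:
  fixes w v k a \<beta> :: real
  assumes "0 \<le> w" "0 < k" "k \<le> v" "0 \<le> a" "0 < \<beta>"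
  shows "w / (v + a) - \<beta> * (v / (v + a))^2 \<le> w / v - \<beta> + 2 * \<beta> * a / k"
proof -
  have v: "v > 0" and va: "v + a > 0" using assms by linarith+
  have first: "w / (v + a) \<le> w / v"
    using assms v by (intro divide_left_mono) auto
  have "\<beta> * (v + a)^2 - \<beta> * v^2 = \<beta> * a * (2 * v + a)"
    by (simp add: algebra_simps power2_eq_square)
  then have "\<beta> - \<beta> * (v / (v + a))^2 = \<beta> * a * (2 * v + a) / (v + a)^2"
    using va by (simp add: power_divide diff_divide_eq_iff right_diff_distrib)
  also have "\<dots> \<le> \<beta> * a * (2 * (v + a)) / (v + a)^2"
    using assms va by (intro divide_right_mono mult_left_mono) auto
  also have "\<dots> = 2 * \<beta> * a * (v + a) / ((v + a) * (v + a))"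
    by (simp add: power2_eq_square mult_ac)
  also have "\<dots> = 2 * \<beta> * a / (v + a)"
    using va by simp
  also have "\<dots> \<le> 2 * \<beta> * a / k"
    using assms by (intro divide_left_mono) auto
  finally show ?thesis using first by linarith
qed

theorem lemma3:
  fixes V :: "'a set" and C :: "'a set set" and k M \<beta> :: real and d :: "'a set"
  assumes "finite V" and "partition_on V C" and "k > 0"
    and "M \<ge> 0" and "\<beta> > 0"
    and "d \<subseteq> V" and "d \<noteq> {}"
  shows "wgt_in (clique_weight C k) d / vol V (clique_weight C k) d - \<beta> - \<beta> * M / k
           \<le> qual M \<beta> V (clique_weight C k) d / \<beta>
       \<and> qual M \<beta> V (clique_weight C k) d / \<beta>
           \<le> wgt_in (clique_weight C k) d / vol V (clique_weight C k) d - \<beta> + 2 * \<beta>^2 * M / k"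
proof -
  define E where "E = clique_weight C k"
  define w where "w = wgt_in E d"
  define v where "v = vol V E d"
  have E_nonneg: "\<And>i j. E i j \<ge> 0"
    unfolding E_def using \<open>k > 0\<close> by (simp add: clique_weight_nonneg)
  have "0 \<le> w" "w \<le> v"
    unfolding w_def v_def using assms E_nonneg by (auto intro: wgt_in_nonneg wgt_in_le_vol)
  moreover have "k \<le> v"
    unfolding v_def E_def using assms by (intro vol_clique_weight_ge) auto
  moreover have "0 \<le> \<beta> * M" using assms by simp
  moreover from calculation have "v + \<beta> * M \<noteq> 0" using \<open>k > 0\<close> by linarith
  moreover have "qual M \<beta> V E d / \<beta> = w / (v + \<beta> * M) - \<beta> * (v / (v + \<beta> * M))^2"
    unfolding qual_def w_def[symmetric] v_def[symmetric]
    using \<open>\<beta> > 0\<close> \<open>v + \<beta> * M \<noteq> 0\<close> by (rule quality_div_scale_eq)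
  ultimately show ?thesis
    using quality_div_scale_lower[of w v k "\<beta> * M" \<beta>]
          quality_div_scale_upper[of w k v "\<beta> * M" \<beta>] assms
    unfolding E_def w_def v_def by (simp add: power2_eq_square mult.assoc)
qed

end
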